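(* Let $S(p)$ be a projectively non-degenerate oriented polyhedral $2$-surface in $\mathbb{R}^3$ with vertices $p_i$, and let $\omega_{ij}$ be the projective lifting coefficients associated to $S$. Then for every vertex $p_i$ of $S$, \[ \sum_{j:\ p_ip_j\text{ an edge of } S}\omega_{ij}\,dp_i\wedge dp_j=0\quad\text{in }\Lambda^2(\mathbb{R}^3), \] i.e. the projective stress $\Psi_{ij}=\omega_{ij}\,dp_i\wedge dp_j$ on the projective framework in $\mathbb{R}P^2$ with vertices $\hat p_i=[p_i]$ and the edges of $S$ is a self-stress.
   Context: $O$ is the origin of $\mathbb{R}^3$; for $p=(a_1,a_2,a_3)\in\mathbb{R}^3$, $dp=a_1dx_1+a_2dx_2+a_3dx_3$, and $\Lambda^2(\mathbb{R}^3)$ is the space of exterior $2$-forms. $\det(u,v,w)$ is the determinant of the matrix with columns $u,v,w$. For $p_1,\dots,p_4$ with affine spans ${\rm span}(p_1,p_2,p_3)$, ${\rm span}(p_1,p_2,p_4)$ two-dimensional and not containing $O$, set $\omega(p_1,p_2;p_3,p_4)=\det(p_2-p_1,p_3-p_1,p_4-p_1)/(\det(p_1,p_2,p_3)\det(p_1,p_2,p_4))$ (it depends only on $p_1,p_2$ and the two planes). $S(p)$ is projectively non-degenerate if the planes of its faces avoid $O$. For an edge oriented as $\overrightarrow{p_ip_j}$, the orientation of $S$ determines a left and a right adjacent face; with $p_k$ a point of the right face and $p_l$ a point of the left face, both off the edge line, $\omega_{ij}=\omega(p_i,p_j;p_k,p_l)$ (independent of choices and symmetric in $i,j$). *)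

theory Defs
  imports "HOL-Analysis.Analysis"
begin

definition det3 :: "real^3 \<Rightarrow> real^3 \<Rightarrow> real^3 \<Rightarrow> real" where
  "det3 u v w = det (\<chi> r c. (if c = 1 then u else if c = 2 then v else w) $ r)"

definition omega :: "real^3 \<Rightarrow> real^3 \<Rightarrow> real^3 \<Rightarrow> real^3 \<Rightarrow> real" where
  "omega p1 p2 p3 p4 =
     det3 (p2 - p1) (p3 - p1) (p4 - p1) / (det3 p1 p2 p3 * det3 p1 p2 p4)"

text \<open>The exterior 2-form dp \<and> dq on R^3, as an alternating bilinear form
  (Lambda^2(R^3) identified with alternating bilinear forms on R^3):
  (dp \<and> dq)(x,y) = dp(x) dq(y) - dp(y) dq(x), where dp(x) = p \<bullet> x.\<close>
definition wedge2 :: "real^3 \<Rightarrow> real^3 \<Rightarrow> real^3 \<Rightarrow> real^3 \<Rightarrow> real" where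
  "wedge2 u v = (\<lambda>x y. (u \<bullet> x) * (v \<bullet> y) - (u \<bullet> y) * (v \<bullet> x))"

text \<open>A face is an oriented polygon given by a cyclic list of vertices;
  its directed edges are consecutive pairs (cyclically).\<close>
definition dedges :: "'v list \<Rightarrow> ('v \<times> 'v) set" where
  "dedges f = {(f ! n, f ! (Suc n mod length f)) | n. n < length f}"

definition vertices :: "'v list set \<Rightarrow> 'v set" where
  "vertices F = \<Union> (set ` F)"

definition star_adj :: "'v list set \<Rightarrow> 'v \<Rightarrow> ('v list \<times> 'v list) set" where
  "star_adj F i = {(f, g). f \<in> F \<and> g \<in> F \<and> (\<exists>j. (i, j) \<in> dedges f \<and> (j, i) \<in> dedges g)}"

text \<open>Closed oriented polyhedral 2-surface: finitely many oriented polygonal faces,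
  every edge lies in exactly two faces which induce opposite orientations on it,
  and the faces around every vertex form a single cycle (disc neighbourhood).\<close>
definition oriented_surface :: "'v list set \<Rightarrow> bool" where
  "oriented_surface F \<longleftrightarrow>
     finite F \<and>
     (\<forall>f\<in>F. distinct f \<and> 3 \<le> length f) \<and>
     (\<forall>f\<in>F. \<forall>g\<in>F. \<forall>e. e \<in> dedges f \<and> e \<in> dedges g \<longrightarrow> f = g) \<and>
     (\<forall>f\<in>F. \<forall>i j. (i, j) \<in> dedges f \<longrightarrow> (\<exists>g\<in>F. (j, i) \<in> dedges g)) \<and>
     (\<forall>i. \<forall>f\<in>F. \<forall>g\<in>F. i \<in> set f \<and> i \<in> set g \<longrightarrow> (f, g) \<in> (star_adj F i)\<^sup>*)"

definition proj_nondeg_realization :: "'v list set \<Rightarrow> ('v \<Rightarrow> real^3) \<Rightarrow> bool" where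
  "proj_nondeg_realization F p \<longleftrightarrow>
     inj_on p (vertices F) \<and>
     (\<forall>f\<in>F. aff_dim (p ` set f) = 2 \<and> 0 \<notin> affine hull (p ` set f))"

definition left_face :: "'v list set \<Rightarrow> 'v \<Rightarrow> 'v \<Rightarrow> 'v list" where
  "left_face F i j = (THE f. f \<in> F \<and> (i, j) \<in> dedges f)"

definition right_face :: "'v list set \<Rightarrow> 'v \<Rightarrow> 'v \<Rightarrow> 'v list" where
  "right_face F i j = (THE g. g \<in> F \<and> (j, i) \<in> dedges g)"

definition omega_edge :: "'v list set \<Rightarrow> ('v \<Rightarrow> real^3) \<Rightarrow> 'v \<Rightarrow> 'v \<Rightarrow> real" where
  "omega_edge F p i j =
     omega (p i) (p j)
       (p (SOME k. k \<in> set (right_face F i j) \<and> p k \<notin> affine hull {p i, p j}))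
       (p (SOME l. l \<in> set (left_face F i j) \<and> p l \<notin> affine hull {p i, p j}))"

definition nbrs :: "'v list set \<Rightarrow> 'v \<Rightarrow> 'v set" where
  "nbrs F i = {j. \<exists>f\<in>F. (i, j) \<in> dedges f \<or> (j, i) \<in> dedges f}"

end

theory Submission
  imports Defs "HOL-Analysis.Cross3"
begin

(* Idea: identify the 2-form dp \<and> dq with the cross product p \<times> q. A face f whose plane avoids
   the origin has a polar vector a_f with a_f \<bullet> p_v = 1 on all its vertices, and for an edge ij
   the lifting coefficient is exactly what makes omega_ij (p_i \<times> p_j) = a_right - a_left. Around
   the vertex i every incident face is the left face of exactly one outgoing edge and the right
   face of exactly one, so the sum telescopes to zero. *)

unbundle cross3_syntax

lemma wedge2_eq_inner_cross: "wedge2 u v x y = (u \<times> v) \<bullet> (x \<times> y)"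
  unfolding wedge2_def by (simp add: cross3_simps forall_3)

lemma det3_scaleR_polar:
  assumes "a \<bullet> u = 1" "a \<bullet> v = 1" "a \<bullet> w = 1"
  shows "det3 u v w *\<^sub>R a = (v - u) \<times> (w - u)"
proof -
  have "det3 u v w *\<^sub>R a = (a \<bullet> u) *\<^sub>R (v \<times> w) + (a \<bullet> v) *\<^sub>R (w \<times> u) + (a \<bullet> w) *\<^sub>R (u \<times> v)"
    unfolding det3_def by (simp add: cross3_simps forall_3)
  with assms show ?thesis by (simp add: cross3_simps forall_3)
qed

lemma det3_neq_0_off_line:
  assumes "a \<bullet> u = 1" "a \<bullet> v = 1" "a \<bullet> w = 1" "u \<noteq> v" "w \<notin> affine hull {u, v}"
  shows "det3 u v w \<noteq> 0"
proof
  assume "det3 u v w = 0"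
  then have "(v - u) \<times> (w - u) = 0" using det3_scaleR_polar[OF assms(1-3)] by simp
  then have "collinear {v, u, w}" by (simp add: cross_eq_0 collinear_3[of v u w])
  then have "collinear {u, v, w}" by (simp add: insert_commute)
  with assms(4,5) show False by (simp add: collinear_3_affine_hull)
qed

lemma omega_scaleR_cross:
  assumes "b \<bullet> u = 1" "b \<bullet> v = 1" "b \<bullet> w = 1"
    and "a \<bullet> u = 1" "a \<bullet> v = 1" "a \<bullet> z = 1"
    and "det3 u v w \<noteq> 0" "det3 u v z \<noteq> 0"
  shows "omega u v w z *\<^sub>R (u \<times> v) = b - a"
proof -
  have "(det3 u v w * det3 u v z) *\<^sub>R (b - a)
      = det3 u v z *\<^sub>R (det3 u v w *\<^sub>R b) - det3 u v w *\<^sub>R (det3 u v z *\<^sub>R a)"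
    by (simp add: algebra_simps)
  also have "\<dots> = det3 u v z *\<^sub>R ((v - u) \<times> (w - u)) - det3 u v w *\<^sub>R ((v - u) \<times> (z - u))"
    using det3_scaleR_polar[OF assms(1-3)] det3_scaleR_polar[OF assms(4-6)] by simp
  also have "\<dots> = det3 (v - u) (w - u) (z - u) *\<^sub>R (u \<times> v)"
    unfolding det3_def by (simp add: cross3_simps forall_3)
  finally show ?thesis
    using assms(7,8) unfolding omega_def vector_fraction_eq_iff by simp
qed

lemma exists_polar_vector:
  fixes S :: "'a::euclidean_space set"
  assumes "aff_dim S = DIM('a) - 1" "0 \<notin> affine hull S"
  shows "\<exists>a. \<forall>x\<in>S. a \<bullet> x = 1"
proof -
  obtain c b where "c \<noteq> 0" and hull: "affine hull S = {x. c \<bullet> x = b}"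
    using assms(1) aff_dim_eq_hyperplane by blast
  then have "b \<noteq> 0" using assms(2) by auto
  moreover have "c \<bullet> x = b" if "x \<in> S" for x
    using hull hull_inc[OF that] by blast
  ultimately have "\<forall>x\<in>S. (c /\<^sub>R b) \<bullet> x = 1" by simp
  then show ?thesis ..
qed

lemma exists_off_affine_line:
  fixes S :: "'a::euclidean_space set"
  assumes "aff_dim S = 2"
  shows "\<exists>x\<in>S. x \<notin> affine hull {u, v}"
proof (rule ccontr)
  assume "\<not> ?thesis"
  then have "aff_dim S \<le> aff_dim {u, v}"
    using aff_dim_subset aff_dim_affine_hull by (metis subsetI)
  also have "\<dots> \<le> 1"
    using aff_dim_le_card[of "{u, v}"] by (cases "u = v") auto
  finally show False using assms by simp
qed

lemma Suc_mod_less: "n < m \<Longrightarrow> Suc n mod m < m"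
  by simp

lemma Suc_mod_neq: "n < m \<Longrightarrow> 2 \<le> m \<Longrightarrow> Suc n mod m \<noteq> n"
  by (cases "Suc n = m") auto

lemma inj_on_Suc_mod: "inj_on (\<lambda>n. Suc n mod m) {..<m}"
  by (rule inj_onI) (auto simp: mod_Suc split: if_splits)

lemma dedges_subset_set: "(a, b) \<in> dedges f \<Longrightarrow> a \<in> set f \<and> b \<in> set f"
  unfolding dedges_def by (auto simp: Suc_mod_less)

lemma dedges_neq:
  assumes "distinct f" "2 \<le> length f" "(a, b) \<in> dedges f"
  shows "a \<noteq> b"
proof -
  obtain n where "n < length f" "a = f ! n" "b = f ! (Suc n mod length f)"
    using assms(3) unfolding dedges_def by blast
  with assms(1,2) show ?thesis by (metis Suc_mod_less Suc_mod_neq nth_eq_iff_index_eq)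
qed

lemma dedges_out_unique:
  assumes "distinct f" "(a, b) \<in> dedges f" "(a, b') \<in> dedges f"
  shows "b = b'"
  using assms unfolding dedges_def by (auto simp: nth_eq_iff_index_eq)

lemma dedges_in_unique:
  assumes "distinct f" "(a, b) \<in> dedges f" "(a', b) \<in> dedges f"
  shows "a = a'"
  using assms inj_on_Suc_mod[of "length f"] unfolding dedges_def
  by (auto simp: nth_eq_iff_index_eq Suc_mod_less dest: inj_onD)

lemma dedges_out_ex: "a \<in> set f \<Longrightarrow> \<exists>b. (a, b) \<in> dedges f"
  unfolding dedges_def by (auto simp: in_set_conv_nth)

lemma dedges_in_ex:
  assumes "a \<in> set f"
  shows "\<exists>b. (b, a) \<in> dedges f"
proof -
  obtain n where n: "n < length f" "a = f ! n" using assms by (auto simp: in_set_conv_nth)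
  define m where "m = (if n = 0 then length f - 1 else n - 1)"
  have "m < length f" "Suc m mod length f = n" using n(1) unfolding m_def by auto
  then show ?thesis unfolding dedges_def using n(2) by force
qed

definition face_polar :: "('v \<Rightarrow> real^3) \<Rightarrow> 'v list \<Rightarrow> real^3" where
  "face_polar p f = (SOME a. \<forall>v\<in>set f. a \<bullet> p v = 1)"

lemma face_polar_inner:
  assumes "proj_nondeg_realization F p" "f \<in> F" "v \<in> set f"
  shows "face_polar p f \<bullet> p v = 1"
proof -
  have "aff_dim (p ` set f) = DIM(real^3) - 1" "0 \<notin> affine hull (p ` set f)"
    using assms(1,2) unfolding proj_nondeg_realization_def by auto
  then have "\<exists>a. \<forall>x\<in>p ` set f. a \<bullet> x = 1" by (rule exists_polar_vector)
  then have "\<exists>a. \<forall>v\<in>set f. a \<bullet> p v = 1" by simp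
  then have "\<forall>v\<in>set f. face_polar p f \<bullet> p v = 1"
    unfolding face_polar_def by (rule someI_ex)
  with assms(3) show ?thesis by blast
qed

lemma face_vertex_off_line:
  assumes "proj_nondeg_realization F p" "f \<in> F"
  shows "\<exists>k. k \<in> set f \<and> p k \<notin> affine hull {u, v}"
proof -
  have "aff_dim (p ` set f) = 2"
    using assms unfolding proj_nondeg_realization_def by blast
  then have "\<exists>x\<in>p ` set f. x \<notin> affine hull {u, v}" by (rule exists_off_affine_line)
  then show ?thesis by blast
qed

lemma face_det3_neq_0:
  assumes "proj_nondeg_realization F p" "f \<in> F" "i \<in> set f" "j \<in> set f" "k \<in> set f"
    and "p i \<noteq> p j" "p k \<notin> affine hull {p i, p j}"
  shows "det3 (p i) (p j) (p k) \<noteq> 0"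
proof -
  have "face_polar p f \<bullet> p v = 1" if "v \<in> set f" for v
    using assms(1,2) that by (rule face_polar_inner)
  with assms(3-7) show ?thesis by (intro det3_neq_0_off_line[of "face_polar p f"]) simp_all
qed

lemma oriented_surface_face_unique:
  assumes "oriented_surface F" "f \<in> F" "g \<in> F" "e \<in> dedges f" "e \<in> dedges g"
  shows "f = g"
  using assms unfolding oriented_surface_def by blast

lemma oriented_surface_distinct:
  assumes "oriented_surface F" "f \<in> F"
  shows "distinct f" "3 \<le> length f"
  using assms unfolding oriented_surface_def by auto

lemma left_face_eqI:
  assumes "oriented_surface F" "f \<in> F" "(i, j) \<in> dedges f"
  shows "left_face F i j = f"
  unfolding left_face_def
  by (rule the_equality) (use assms oriented_surface_face_unique in blast)+

lemma right_face_eqI: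
  assumes "oriented_surface F" "g \<in> F" "(j, i) \<in> dedges g"
  shows "right_face F i j = g"
  unfolding right_face_def
  by (rule the_equality) (use assms oriented_surface_face_unique in blast)+

lemma nbrs_iff_left_edge:
  assumes "oriented_surface F"
  shows "j \<in> nbrs F i \<longleftrightarrow> (\<exists>f\<in>F. (i, j) \<in> dedges f)"
  using assms unfolding nbrs_def oriented_surface_def by blast

lemma nbrs_iff_right_edge:
  assumes "oriented_surface F"
  shows "j \<in> nbrs F i \<longleftrightarrow> (\<exists>g\<in>F. (j, i) \<in> dedges g)"
  using assms unfolding nbrs_def oriented_surface_def by blast

lemma bij_betw_left_face:
  assumes "oriented_surface F"
  shows "bij_betw (left_face F i) (nbrs F i) {f \<in> F. i \<in> set f}"
proof (rule bij_betwI')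
  fix j j' assume "j \<in> nbrs F i" "j' \<in> nbrs F i"
  then obtain f f' where f: "f \<in> F" "(i, j) \<in> dedges f" and f': "f' \<in> F" "(i, j') \<in> dedges f'"
    unfolding nbrs_iff_left_edge[OF assms] by blast
  show "(left_face F i j = left_face F i j') = (j = j')"
  proof
    assume "left_face F i j = left_face F i j'"
    then have "f = f'" unfolding left_face_eqI[OF assms f] left_face_eqI[OF assms f'] .
    then show "j = j'"
      using dedges_out_unique[OF oriented_surface_distinct(1)[OF assms f(1)] f(2)] f'(2) by simp
  qed simp
next
  fix j assume "j \<in> nbrs F i"
  then obtain f where f: "f \<in> F" "(i, j) \<in> dedges f"
    unfolding nbrs_iff_left_edge[OF assms] by blast
  then show "left_face F i j \<in> {f \<in> F. i \<in> set f}"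
    unfolding left_face_eqI[OF assms f] using f(1) dedges_subset_set[OF f(2)] by simp
next
  fix f assume "f \<in> {f \<in> F. i \<in> set f}"
  then have f: "f \<in> F" "i \<in> set f" by simp_all
  obtain j where j: "(i, j) \<in> dedges f" using dedges_out_ex[OF f(2)] by blast
  have "j \<in> nbrs F i" unfolding nbrs_iff_left_edge[OF assms] using f(1) j by blast
  moreover have "f = left_face F i j" using left_face_eqI[OF assms f(1) j] by simp
  ultimately show "\<exists>j \<in> nbrs F i. f = left_face F i j" by blast
qed

lemma bij_betw_right_face:
  assumes "oriented_surface F"
  shows "bij_betw (right_face F i) (nbrs F i) {f \<in> F. i \<in> set f}"
proof (rule bij_betwI')
  fix j j' assume "j \<in> nbrs F i" "j' \<in> nbrs F i"
  then obtain f f' where f: "f \<in> F" "(j, i) \<in> dedges f" and f': "f' \<in> F" "(j', i) \<in> dedges f'"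
    unfolding nbrs_iff_right_edge[OF assms] by blast
  show "(right_face F i j = right_face F i j') = (j = j')"
  proof
    assume "right_face F i j = right_face F i j'"
    then have "f = f'" unfolding right_face_eqI[OF assms f] right_face_eqI[OF assms f'] .
    then show "j = j'"
      using dedges_in_unique[OF oriented_surface_distinct(1)[OF assms f(1)] f(2)] f'(2) by simp
  qed simp
next
  fix j assume "j \<in> nbrs F i"
  then obtain f where f: "f \<in> F" "(j, i) \<in> dedges f"
    unfolding nbrs_iff_right_edge[OF assms] by blast
  then show "right_face F i j \<in> {f \<in> F. i \<in> set f}"
    unfolding right_face_eqI[OF assms f] using f(1) dedges_subset_set[OF f(2)] by simp
next
  fix f assume "f \<in> {f \<in> F. i \<in> set f}"
  then have f: "f \<in> F" "i \<in> set f" by simp_all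
  obtain j where j: "(j, i) \<in> dedges f" using dedges_in_ex[OF f(2)] by blast
  have "j \<in> nbrs F i" unfolding nbrs_iff_right_edge[OF assms] using f(1) j by blast
  moreover have "f = right_face F i j" using right_face_eqI[OF assms f(1) j] by simp
  ultimately show "\<exists>j \<in> nbrs F i. f = right_face F i j" by blast
qed

lemma edge_ends_neq:
  assumes "oriented_surface F" "proj_nondeg_realization F p" "f \<in> F" "(i, j) \<in> dedges f"
  shows "p i \<noteq> p j"
proof -
  have "i \<noteq> j"
    using dedges_neq[OF oriented_surface_distinct(1)[OF assms(1,3)] _ assms(4)]
      oriented_surface_distinct(2)[OF assms(1,3)] by linarith
  moreover have "inj_on p (vertices F)" "i \<in> vertices F" "j \<in> vertices F"
    using assms(2-4) dedges_subset_set[OF assms(4)]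
    unfolding proj_nondeg_realization_def vertices_def by auto
  ultimately show ?thesis by (metis inj_onD)
qed

lemma omega_edge_scaleR_cross:
  assumes S: "oriented_surface F" and P: "proj_nondeg_realization F p" and "j \<in> nbrs F i"
  shows "omega_edge F p i j *\<^sub>R (p i \<times> p j)
    = face_polar p (right_face F i j) - face_polar p (left_face F i j)"
proof -
  from assms(3) obtain f where f: "f \<in> F" "(i, j) \<in> dedges f"
    unfolding nbrs_iff_left_edge[OF S] by blast
  from assms(3) obtain g where g: "g \<in> F" "(j, i) \<in> dedges g"
    unfolding nbrs_iff_right_edge[OF S] by blast
  have left: "left_face F i j = f" and right: "right_face F i j = g"
    using left_face_eqI[OF S f] right_face_eqI[OF S g] .
  have ij: "i \<in> set f" "j \<in> set f" "i \<in> set g" "j \<in> set g"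
    using dedges_subset_set[OF f(2)] dedges_subset_set[OF g(2)] by auto
  have pij: "p i \<noteq> p j" using edge_ends_neq[OF S P f] .
  define k where "k = (SOME k. k \<in> set g \<and> p k \<notin> affine hull {p i, p j})"
  define l where "l = (SOME l. l \<in> set f \<and> p l \<notin> affine hull {p i, p j})"
  have k: "k \<in> set g" "p k \<notin> affine hull {p i, p j}"
    unfolding k_def using someI_ex[OF face_vertex_off_line[OF P g(1)]] by blast+
  have l: "l \<in> set f" "p l \<notin> affine hull {p i, p j}"
    unfolding l_def using someI_ex[OF face_vertex_off_line[OF P f(1)]] by blast+
  have "omega_edge F p i j = omega (p i) (p j) (p k) (p l)"
    unfolding omega_edge_def left right k_def l_def ..
  moreover have "det3 (p i) (p j) (p k) \<noteq> 0" "det3 (p i) (p j) (p l) \<noteq> 0"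
    using face_det3_neq_0[OF P g(1) ij(3,4) k(1) pij k(2)]
      face_det3_neq_0[OF P f(1) ij(1,2) l(1) pij l(2)] by auto
  moreover have "face_polar p g \<bullet> p v = 1" if "v \<in> set g" for v
    using P g(1) that by (rule face_polar_inner)
  moreover have "face_polar p f \<bullet> p v = 1" if "v \<in> set f" for v
    using P f(1) that by (rule face_polar_inner)
  ultimately show ?thesis
    unfolding left right using ij k(1) l(1) by (simp add: omega_scaleR_cross)
qed

theorem theorem3p5:
  fixes F :: "'v list set" and p :: "'v \<Rightarrow> real^3" and i :: 'v
  assumes "oriented_surface F"
    and "proj_nondeg_realization F p"
    and "i \<in> vertices F"
  shows "(\<lambda>x y. \<Sum>j\<in>nbrs F i. omega_edge F p i j * wedge2 (p i) (p j) x y) = (\<lambda>x y. 0)"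
proof (intro ext)
  fix x y
  have "(\<Sum>j\<in>nbrs F i. omega_edge F p i j *\<^sub>R (p i \<times> p j))
      = (\<Sum>j\<in>nbrs F i. face_polar p (right_face F i j))
        - (\<Sum>j\<in>nbrs F i. face_polar p (left_face F i j))"
    using omega_edge_scaleR_cross[OF assms(1,2)] by (simp add: sum_subtractf)
  also have "\<dots> = 0"
    using sum.reindex_bij_betw[OF bij_betw_right_face[OF assms(1)], of "face_polar p"]
      sum.reindex_bij_betw[OF bij_betw_left_face[OF assms(1)], of "face_polar p"] by simp
  finally have "(\<Sum>j\<in>nbrs F i. omega_edge F p i j *\<^sub>R (p i \<times> p j)) \<bullet> (x \<times> y) = 0"
    by simp
  then show "(\<Sum>j\<in>nbrs F i. omega_edge F p i j * wedge2 (p i) (p j) x y) = 0"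
    by (simp add: wedge2_eq_inner_cross inner_sum_left)
qed

end
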